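(* Let $3 \leq r \leq s \leq t$ be integers. Then for sufficiently large $n$, \[ \mathrm{ex}_r ( n , \textup{Berge-}K_{s,t} ) = O \big( n^{ r - \frac{r (r - 1) }{2s} } \big), \] where the implied constant depends only on $r,s,t$.
   Context: A hypergraph $H$ is a Berge-$F$ (for a graph $F$) if there is a bijection $f : E(F) \to E(H)$ with $e \subseteq f(e)$ for every $e \in E(F)$. $\mathrm{ex}_r(n,\textup{Berge-}F)$ is the maximum number of edges in an $n$-vertex $r$-uniform hypergraph containing no subhypergraph that is a Berge-$F$. *)

theory Defs
  imports Complex_Main
begin

definition uniform_hypergraph :: "nat \<Rightarrow> nat \<Rightarrow> nat set set \<Rightarrow> bool" where
  "uniform_hypergraph r n H \<longleftrightarrow> (\<forall>e\<in>H. e \<subseteq> {0..<n} \<and> card e = r)"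

text \<open>H contains a Berge copy of the graph F (F given as a set of edges, each a 2-set):
  a bijection f from E(F) onto a subhypergraph of H with e \<subseteq> f e.\<close>
definition berge_copy :: "nat set set \<Rightarrow> nat set set \<Rightarrow> bool" where
  "berge_copy F H \<longleftrightarrow> (\<exists>f. inj_on f F \<and> f ` F \<subseteq> H \<and> (\<forall>e\<in>F. e \<subseteq> f e))"

definition is_Kst :: "nat \<Rightarrow> nat \<Rightarrow> nat set set \<Rightarrow> bool" where
  "is_Kst s t F \<longleftrightarrow> (\<exists>A B. finite A \<and> finite B \<and> A \<inter> B = {} \<and> card A = s \<and> card B = t
       \<and> F = {{a, b} | a b. a \<in> A \<and> b \<in> B})"

definition contains_berge_Kst :: "nat \<Rightarrow> nat \<Rightarrow> nat set set \<Rightarrow> bool" where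
  "contains_berge_Kst s t H \<longleftrightarrow> (\<exists>F. is_Kst s t F \<and> berge_copy F H)"

definition ex_berge_Kst :: "nat \<Rightarrow> nat \<Rightarrow> nat \<Rightarrow> nat \<Rightarrow> nat" where
  "ex_berge_Kst r n s t = Max {card H | H. uniform_hypergraph r n H \<and> \<not> contains_berge_Kst s t H}"

end

theory Submission
  imports Defs
begin

text \<open>
  Choose a maximal subfamily \<open>B\<close> of \<open>H\<close> whose hyperedges can be assigned distinct pairs
  \<open>g e \<subseteq> e\<close>. The graph \<open>G\<close> formed by these pairs contains no \<open>K\<^sub>s\<^sub>,\<^sub>t\<close>, since
  inverting \<open>g\<close> would turn a copy into a Berge copy in \<open>H\<close>; by maximality every other
  hyperedge spans an \<open>r\<close>-clique of \<open>G\<close>. Hence \<open>|H|\<close> is at most the number of edges plus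
  the number of \<open>r\<close>-cliques of \<open>G\<close>.

  A \<open>K\<^sub>s\<^sub>,\<^sub>t\<close>-free graph on \<open>n\<close> vertices has \<open>O(n\<^bsup>m - m(m-1)/(2s)\<^esup>)\<close>
  \<open>m\<close>-cliques. Each \<open>(m+1)\<close>-clique is a vertex together with an \<open>m\<close>-clique in its
  neighbourhood, and neighbourhoods are \<open>K\<^sub>s\<^sub>-\<^sub>1\<^sub>,\<^sub>t\<close>-free, so induction
  bounds the count by \<open>\<Sum>\<^sub>v d(v)\<^bsup>a\<^esup>\<close>. Splitting the degrees at \<open>n\<^bsup>1-1/s\<^esup>\<close>, the
  large ones are controlled by the Kovari-Sos-Turan double count
  \<open>\<Sum>\<^sub>v (d(v) choose s) \<le> t (n choose s)\<close>.
\<close>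

section \<open>Exponents and power sums\<close>

definition clique_exponent :: "nat \<Rightarrow> nat \<Rightarrow> real" where
  "clique_exponent m s = real m - real m * (real m - 1) / (2 * real s)"

lemma clique_exponent_Suc:
  assumes "2 \<le> s"
  shows "1 + (1 - 1 / real s) * clique_exponent m (s - 1) = clique_exponent (Suc m) s"
  using assms unfolding clique_exponent_def by (simp add: of_nat_diff field_simps)

lemma clique_exponent_bounds:
  assumes "1 \<le> m" "m \<le> s"
  shows "0 < clique_exponent m s" "clique_exponent m s \<le> real m"
proof -
  have "real m * (real m - 1) \<le> real s * (real m - 1)"
    using assms by (intro mult_right_mono) auto
  then have "real m * (real m - 1) / (2 * real s) \<le> (real m - 1) / 2"
    using assms by (simp add: field_simps)
  moreover have "0 \<le> real m * (real m - 1) / (2 * real s)"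
    using assms by simp
  ultimately show "0 < clique_exponent m s" "clique_exponent m s \<le> real m"
    using assms unfolding clique_exponent_def by auto
qed

lemma clique_exponent_two_le:
  assumes "2 \<le> r" "r \<le> s"
  shows "clique_exponent 2 s \<le> clique_exponent r s"
proof -
  have "(real r - 2) * (real r + 1) \<le> (real r - 2) * (2 * real s)"
    using assms by (intro mult_left_mono) auto
  moreover have "real r * (real r - 1) - 2 = (real r - 2) * (real r + 1)"
    by (simp add: algebra_simps)
  ultimately have "(real r * (real r - 1) - 2) / (2 * real s) \<le> real r - 2"
    using assms by (subst pos_divide_le_eq) auto
  then show ?thesis
    unfolding clique_exponent_def diff_divide_distrib by simp
qed

lemma powr_le_split:
  fixes d l a :: real
  assumes "0 \<le> d" "0 < l" "0 < a" "a < real s"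
  shows "d powr a \<le> l powr a + d ^ s * l powr (a - real s)"
proof (cases "d \<le> l")
  case True
  then have "d powr a \<le> l powr a"
    using assms by (intro powr_mono2) auto
  then show ?thesis
    using assms(1) by (simp add: add_increasing2)
next
  case False
  then have "d powr a = d ^ s * d powr (a - real s)"
    using assms by (simp add: powr_realpow[symmetric] powr_add[symmetric])
  also have "\<dots> \<le> d ^ s * l powr (a - real s)"
    using False assms by (intro mult_left_mono powr_mono2') auto
  finally show ?thesis
    by (simp add: add_increasing)
qed

lemma sum_powr_le_of_sum_power_le:
  fixes d :: "'a \<Rightarrow> real"
  assumes V: "finite V" and d: "\<And>v. v \<in> V \<Longrightarrow> 0 \<le> d v"
    and a: "0 < a" "a < real s"
    and moment: "(\<Sum>v\<in>V. d v ^ s) \<le> K * real (card V) ^ s"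
  shows "(\<Sum>v\<in>V. d v powr a) \<le> (1 + K) * real (card V) powr (1 + (1 - 1 / real s) * a)"
proof (cases "V = {}")
  case False
  define n where "n = real (card V)"
  define l where "l = n powr (1 - 1 / real s)"
  have n: "0 < n" using V False by (simp add: n_def card_gt_0_iff)
  have "n * l powr a = n powr (1 + (1 - 1 / real s) * a)"
    using n by (simp add: l_def powr_powr powr_add)
  moreover have "l powr (a - real s) * n ^ s = n powr (1 + (1 - 1 / real s) * a)"
    using n a by (simp add: l_def powr_powr powr_realpow[symmetric] powr_add[symmetric] field_simps)
  moreover have "(\<Sum>v\<in>V. d v powr a) \<le> (\<Sum>v\<in>V. l powr a + d v ^ s * l powr (a - real s))"
    using d a n by (intro sum_mono powr_le_split) (auto simp: l_def)
  moreover have "(\<Sum>v\<in>V. l powr a + d v ^ s * l powr (a - real s))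
      = n * l powr a + l powr (a - real s) * (\<Sum>v\<in>V. d v ^ s)"
    by (simp add: sum.distrib sum_distrib_left mult.commute n_def)
  moreover have "l powr (a - real s) * (\<Sum>v\<in>V. d v ^ s) \<le> K * (l powr (a - real s) * n ^ s)"
    using mult_left_mono[OF moment, of "l powr (a - real s)"] by (simp add: n_def mult_ac)
  ultimately show ?thesis
    by (simp add: n_def algebra_simps)
qed simp

section \<open>Counting cliques in \<open>K\<^sub>s\<^sub>,\<^sub>t\<close>-free graphs\<close>

definition nbhd :: "nat set \<Rightarrow> nat set set \<Rightarrow> nat \<Rightarrow> nat set" where
  "nbhd V E v = {u \<in> V. u \<noteq> v \<and> {u, v} \<in> E}"

definition Kst_free :: "nat \<Rightarrow> nat \<Rightarrow> nat set \<Rightarrow> nat set set \<Rightarrow> bool" where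
  "Kst_free s t V E \<longleftrightarrow> \<not> (\<exists>A B. A \<subseteq> V \<and> B \<subseteq> V \<and> A \<inter> B = {} \<and> card A = s \<and> card B = t
      \<and> (\<forall>a\<in>A. \<forall>b\<in>B. {a, b} \<in> E))"

definition cliques :: "nat \<Rightarrow> nat set \<Rightarrow> nat set set \<Rightarrow> nat set set" where
  "cliques m V E = {Q. Q \<subseteq> V \<and> card Q = m \<and> (\<forall>x\<in>Q. \<forall>y\<in>Q. x \<noteq> y \<longrightarrow> {x, y} \<in> E)}"

lemma nbhd_subset: "nbhd V E v \<subseteq> V"
  by (auto simp: nbhd_def)

lemma finite_cliques: "finite V \<Longrightarrow> finite (cliques m V E)"
  by (rule finite_subset[of _ "Pow V"]) (auto simp: cliques_def)

lemma card_common_nbhd_less: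
  assumes "Kst_free s t V E" "S \<subseteq> V" "card S = s" "finite V"
  shows "card {v \<in> V. S \<subseteq> nbhd V E v} < t"
proof (rule ccontr)
  assume "\<not> ?thesis"
  then obtain B where B: "B \<subseteq> {v \<in> V. S \<subseteq> nbhd V E v}" "card B = t"
    by (meson not_less obtain_subset_with_card_n)
  then have "S \<inter> B = {}" "\<forall>a\<in>S. \<forall>b\<in>B. {a, b} \<in> E" "B \<subseteq> V"
    by (auto simp: nbhd_def)
  with assms B(2) show False
    unfolding Kst_free_def by blast
qed

lemma sum_nbhd_choose_le:
  assumes V: "finite V" and free: "Kst_free s t V E"
  shows "(\<Sum>v\<in>V. card (nbhd V E v) choose s) \<le> t * (card V choose s)"
proof -
  define Ss where "Ss = {S. S \<subseteq> V \<and> card S = s}"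
  have Ss: "finite Ss"
    unfolding Ss_def using V by simp
  have "card (nbhd V E v) choose s = card {S \<in> Ss. S \<subseteq> nbhd V E v}" if "v \<in> V" for v
  proof -
    have "{S \<in> Ss. S \<subseteq> nbhd V E v} = {S. S \<subseteq> nbhd V E v \<and> card S = s}"
      using nbhd_subset[of V E v] by (auto simp: Ss_def)
    then show ?thesis
      using n_subsets finite_subset[OF nbhd_subset V] by metis
  qed
  then have "(\<Sum>v\<in>V. card (nbhd V E v) choose s) = (\<Sum>v\<in>V. \<Sum>S\<in>Ss. of_bool (S \<subseteq> nbhd V E v))"
    using Ss by (simp add: Collect_conj_eq)
  also have "\<dots> = (\<Sum>S\<in>Ss. card {v \<in> V. S \<subseteq> nbhd V E v})"
    using V by (subst sum.swap) (simp add: Collect_conj_eq)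
  also have "\<dots> \<le> (\<Sum>S\<in>Ss. t)"
    using card_common_nbhd_less[OF free _ _ V] by (intro sum_mono) (auto simp: Ss_def less_imp_le)
  also have "\<dots> = t * (card V choose s)"
    using n_subsets[OF V, of s] by (simp add: Ss_def)
  finally show ?thesis .
qed

lemma power_le_choose_bound: "real d ^ s \<le> real s ^ s * (real (d choose s) + 1)"
proof (cases "s \<le> d")
  case True
  have "real d ^ s = real s ^ s * (real d / real s) ^ s" if "s \<noteq> 0"
    using that by (simp add: power_divide)
  moreover have "(real d / real s) ^ s \<le> real (d choose s)"
    by (rule binomial_ge_n_over_k_pow_k[OF True])
  ultimately show ?thesis
    by (cases "s = 0") (auto simp: distrib_left intro: add_increasing2 mult_left_mono)
next
  case False
  then have "real d ^ s \<le> real s ^ s"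
    by (intro power_mono) auto
  then show ?thesis
    by (simp add: distrib_left add_increasing)
qed

lemma sum_degree_power_le:
  assumes V: "finite V" and free: "Kst_free s t V E" and "1 \<le> s"
  shows "(\<Sum>v\<in>V. real (card (nbhd V E v)) ^ s) \<le> real s ^ s * (real t + 1) * real (card V) ^ s"
proof -
  have KST: "real (\<Sum>v\<in>V. card (nbhd V E v) choose s) \<le> real (t * (card V choose s))"
    using sum_nbhd_choose_le[OF V free] by (simp only: of_nat_le_iff)
  have "card V choose s \<le> card V ^ s"
    by (cases "s \<le> card V") (simp_all add: binomial_le_pow binomial_eq_0)
  then have choose_le: "real (card V choose s) \<le> real (card V) ^ s"
    by (simp flip: of_nat_power)
  have card_le: "real (card V) \<le> real (card V) ^ s"
    using \<open>1 \<le> s\<close> by (cases "card V") (simp_all flip: of_nat_power add: self_le_power)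
  have "(\<Sum>v\<in>V. real (card (nbhd V E v)) ^ s)
      \<le> (\<Sum>v\<in>V. real s ^ s * (real (card (nbhd V E v) choose s) + 1))"
    by (intro sum_mono power_le_choose_bound)
  also have "\<dots> = real s ^ s * (real (\<Sum>v\<in>V. card (nbhd V E v) choose s) + real (card V))"
    by (simp add: sum_distrib_left[symmetric] sum.distrib)
  also have "\<dots> \<le> real s ^ s * (real t * real (card V choose s) + real (card V))"
    using KST by (intro mult_left_mono add_right_mono) simp_all
  also have "\<dots> \<le> real s ^ s * (real t * real (card V) ^ s + real (card V) ^ s)"
    using choose_le card_le by (intro mult_left_mono add_mono) auto
  finally show ?thesis
    by (simp add: algebra_simps)
qed

lemma Kst_free_nbhd:
  assumes free: "Kst_free s t V E" and "1 \<le> s" "v \<in> V" "finite V"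
  shows "Kst_free (s - 1) t (nbhd V E v) E"
  unfolding Kst_free_def
proof
  assume "\<exists>A B. A \<subseteq> nbhd V E v \<and> B \<subseteq> nbhd V E v \<and> A \<inter> B = {} \<and> card A = s - 1
      \<and> card B = t \<and> (\<forall>a\<in>A. \<forall>b\<in>B. {a, b} \<in> E)"
  then obtain A B where AB: "A \<subseteq> nbhd V E v" "B \<subseteq> nbhd V E v" "A \<inter> B = {}" "card A = s - 1"
    "card B = t" "\<forall>a\<in>A. \<forall>b\<in>B. {a, b} \<in> E" by blast
  have "finite A"
    using AB(1) nbhd_subset \<open>finite V\<close> by (metis finite_subset)
  moreover have "v \<notin> A" "v \<notin> B"
    using AB by (auto simp: nbhd_def)
  ultimately have "insert v A \<subseteq> V" "insert v A \<inter> B = {}" "card (insert v A) = s"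
    "\<forall>a\<in>insert v A. \<forall>b\<in>B. {a, b} \<in> E"
    using AB \<open>v \<in> V\<close> \<open>1 \<le> s\<close> by (auto simp: nbhd_def insert_commute)
  moreover have "B \<subseteq> V"
    using AB(2) nbhd_subset by blast
  ultimately show False
    using free AB(5) unfolding Kst_free_def by blast
qed

lemma cliques_one: "cliques 1 V E = (\<lambda>v. {v}) ` V"
  by (auto simp: cliques_def card_Suc_eq)

lemma cliques_Suc_subset:
  "cliques (Suc m) V E \<subseteq> (\<Union>v\<in>V. insert v ` cliques m (nbhd V E v) E)"
proof
  fix Q assume Q: "Q \<in> cliques (Suc m) V E"
  then have "card Q = Suc m"
    by (simp add: cliques_def)
  then obtain v R where R: "Q = insert v R" "v \<notin> R" "card R = m"
    using card_eq_SucD by blast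
  then have "R \<in> cliques m (nbhd V E v) E" "v \<in> V"
    using Q by (auto simp: cliques_def nbhd_def)
  then show "Q \<in> (\<Union>v\<in>V. insert v ` cliques m (nbhd V E v) E)"
    using R(1) by blast
qed

lemma card_cliques_Suc_le:
  assumes "finite V"
  shows "card (cliques (Suc m) V E) \<le> (\<Sum>v\<in>V. card (cliques m (nbhd V E v) E))"
proof -
  have fin: "finite (cliques m (nbhd V E v) E)" for v
    using finite_cliques finite_subset[OF nbhd_subset \<open>finite V\<close>] by blast
  have "card (cliques (Suc m) V E) \<le> card (\<Union>v\<in>V. insert v ` cliques m (nbhd V E v) E)"
    using assms fin by (intro card_mono[OF _ cliques_Suc_subset]) auto
  also have "\<dots> \<le> (\<Sum>v\<in>V. card (insert v ` cliques m (nbhd V E v) E))"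
    using assms by (rule card_UN_le)
  also have "\<dots> \<le> (\<Sum>v\<in>V. card (cliques m (nbhd V E v) E))"
    using fin by (intro sum_mono card_image_le)
  finally show ?thesis .
qed

lemma card_cliques_Suc_bound:
  assumes V: "finite V" and free: "Kst_free s t V E" and s: "2 \<le> s"
    and a: "0 < a" "a < real s" and c: "0 \<le> c"
    and IH: "\<And>W. finite W \<Longrightarrow> Kst_free (s - 1) t W E \<Longrightarrow>
      real (card (cliques m W E)) \<le> c * real (card W) powr a"
  shows "real (card (cliques (Suc m) V E))
    \<le> c * (1 + real s ^ s * (real t + 1)) * real (card V) powr (1 + (1 - 1 / real s) * a)"
proof -
  have "real (card (cliques (Suc m) V E)) \<le> (\<Sum>v\<in>V. real (card (cliques m (nbhd V E v) E)))"
    using card_cliques_Suc_le[OF V, of m E] by (simp flip: of_nat_sum)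
  also have "\<dots> \<le> (\<Sum>v\<in>V. c * real (card (nbhd V E v)) powr a)"
    using s V by (intro sum_mono IH Kst_free_nbhd[OF free] finite_subset[OF nbhd_subset]) auto
  also have "\<dots> = c * (\<Sum>v\<in>V. real (card (nbhd V E v)) powr a)"
    by (simp add: sum_distrib_left)
  also have "\<dots> \<le> c * ((1 + real s ^ s * (real t + 1)) * real (card V) powr (1 + (1 - 1 / real s) * a))"
    using sum_degree_power_le[OF V free] V s a c
    by (intro mult_left_mono sum_powr_le_of_sum_power_le) (auto simp: mult.assoc)
  finally show ?thesis
    by (simp add: mult.assoc)
qed

lemma Kst_free_card_cliques_le:
  assumes "1 \<le> m" "m \<le> s"
  shows "\<exists>c>0. \<forall>V E. finite V \<longrightarrow> Kst_free s t V E \<longrightarrow>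
    real (card (cliques m V E)) \<le> c * real (card V) powr clique_exponent m s"
  using assms
proof (induction m arbitrary: s)
  case (Suc m)
  show ?case
  proof (cases "m = 0")
    case True
    then have "real (card (cliques (Suc m) V E)) \<le> 1 * real (card V) powr clique_exponent (Suc m) s"
      if "finite V" for V E
      using that cliques_one[of V E] by (simp add: card_image_le clique_exponent_def)
    then show ?thesis
      by (intro exI[of _ 1]) auto
  next
    case False
    then have s: "2 \<le> s" and m: "1 \<le> m" "m \<le> s - 1"
      using Suc.prems by auto
    obtain c where "0 < c" and c: "\<And>V E. finite V \<Longrightarrow> Kst_free (s - 1) t V E \<Longrightarrow>
        real (card (cliques m V E)) \<le> c * real (card V) powr clique_exponent m (s - 1)"
      using Suc.IH[OF m] by blast
    have "real m < real s"
      using m s by simp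
    then have "0 < clique_exponent m (s - 1)" "clique_exponent m (s - 1) < real s"
      using clique_exponent_bounds[OF m] by linarith+
    then have "real (card (cliques (Suc m) V E))
        \<le> c * (1 + real s ^ s * (real t + 1)) * real (card V) powr clique_exponent (Suc m) s"
      if "finite V" "Kst_free s t V E" for V E
      using card_cliques_Suc_bound[OF that s _ _ _ c] \<open>0 < c\<close> clique_exponent_Suc[OF s] by simp
    moreover have "0 < c * (1 + real s ^ s * (real t + 1))"
      using \<open>0 < c\<close> by (simp add: add_pos_nonneg)
    ultimately show ?thesis
      by blast
  qed
qed simp

section \<open>From Berge-free hypergraphs to \<open>K\<^sub>s\<^sub>,\<^sub>t\<close>-free graphs\<close>

lemma obtain_maximal_pair_system:
  assumes "finite H"
  obtains B g where "B \<subseteq> H" "inj_on g B" "\<And>e. e \<in> B \<Longrightarrow> g e \<subseteq> e \<and> card (g e) = 2"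
    "\<And>e x y. e \<in> H - B \<Longrightarrow> x \<in> e \<Longrightarrow> y \<in> e \<Longrightarrow> x \<noteq> y \<Longrightarrow> {x, y} \<in> g ` B"
proof -
  define P where "P B \<longleftrightarrow> B \<subseteq> H \<and> (\<exists>g. inj_on g B \<and> (\<forall>e\<in>B. g e \<subseteq> e \<and> card (g e) = 2))" for B
  have "\<forall>B. P B \<longrightarrow> card B < card H + 1"
    using assms by (auto simp: P_def intro: card_mono le_imp_less_Suc)
  moreover have "P {}"
    by (simp add: P_def)
  ultimately obtain B where "P B" and maximal: "\<And>B'. P B' \<Longrightarrow> card B' \<le> card B"
    using ex_has_greatest_nat[of P "{}" card] by blast
  then obtain g where B: "B \<subseteq> H" "inj_on g B" "\<And>e. e \<in> B \<Longrightarrow> g e \<subseteq> e \<and> card (g e) = 2"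
    unfolding P_def by blast
  have rest: "{x, y} \<in> g ` B" if e: "e \<in> H - B" and xy: "x \<in> e" "y \<in> e" "x \<noteq> y" for e x y
  proof (rule ccontr)
    assume new: "{x, y} \<notin> g ` B"
    have "B - {e} = B" "g(e := {x, y}) ` B = g ` B"
      using e by (auto intro: image_cong)
    then have "inj_on (g(e := {x, y})) (insert e B)"
      using inj_on_fun_updI[OF B(2) new] new
      by (simp only: inj_on_insert fun_upd_same simp_thms)
    then have "P (insert e B)"
      using B e xy unfolding P_def by (intro conjI exI[of _ "g(e := {x, y})"]) auto
    moreover have "card (insert e B) = card B + 1"
      using e B(1) assms finite_subset by fastforce
    ultimately show False
      using maximal[of "insert e B"] by simp
  qed
  from B rest show thesis
    by (rule that)
qed

lemma Kst_free_of_not_contains_berge: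
  assumes "\<not> contains_berge_Kst s t H" "finite V"
    and "B \<subseteq> H" "inj_on g B" "\<And>e. e \<in> B \<Longrightarrow> g e \<subseteq> e"
  shows "Kst_free s t V (g ` B)"
  unfolding Kst_free_def
proof
  assume "\<exists>X Y. X \<subseteq> V \<and> Y \<subseteq> V \<and> X \<inter> Y = {} \<and> card X = s \<and> card Y = t
      \<and> (\<forall>x\<in>X. \<forall>y\<in>Y. {x, y} \<in> g ` B)"
  then obtain X Y where XY: "X \<subseteq> V" "Y \<subseteq> V" "X \<inter> Y = {}" "card X = s" "card Y = t"
    "\<forall>x\<in>X. \<forall>y\<in>Y. {x, y} \<in> g ` B" by blast
  define F where "F = {{x, y} | x y. x \<in> X \<and> y \<in> Y}"
  have "finite X" "finite Y"
    using XY(1,2) \<open>finite V\<close> finite_subset by auto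
  then have "is_Kst s t F"
    unfolding is_Kst_def F_def using XY(3-5) by (intro exI[of _ X] exI[of _ Y]) simp
  moreover have "berge_copy F H"
    unfolding berge_copy_def
  proof (intro exI conjI)
    have FB: "F \<subseteq> g ` B"
      using XY(6) by (auto simp: F_def)
    then show "inj_on (the_inv_into B g) F"
      using inj_on_the_inv_into[OF assms(4)] inj_on_subset by blast
    show "the_inv_into B g ` F \<subseteq> H"
      using FB the_inv_into_into[OF assms(4)] assms(3) by blast
    show "\<forall>p\<in>F. p \<subseteq> the_inv_into B g p"
    proof
      fix p assume "p \<in> F"
      then obtain e where "e \<in> B" "p = g e"
        using FB by blast
      then show "p \<subseteq> the_inv_into B g p"
        using assms(4,5) by (simp add: the_inv_into_f_f)
    qed
  qed
  ultimately show False
    using assms(1) unfolding contains_berge_Kst_def by blast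
qed

lemma card_le_card_cliques_of_not_contains_berge:
  assumes H: "uniform_hypergraph r n H" and free: "\<not> contains_berge_Kst s t H"
  obtains E where "Kst_free s t {0..<n} E"
    "card H \<le> card (cliques 2 {0..<n} E) + card (cliques r {0..<n} E)"
proof -
  define V where "V = {0..<n}"
  have HV: "\<And>e. e \<in> H \<Longrightarrow> e \<subseteq> V \<and> card e = r"
    using H by (auto simp: uniform_hypergraph_def V_def)
  have "H \<subseteq> Pow V"
    using HV by blast
  then have "finite H"
    by (rule finite_subset) (simp add: V_def)
  then obtain B g where B: "B \<subseteq> H" "inj_on g B" "\<And>e. e \<in> B \<Longrightarrow> g e \<subseteq> e \<and> card (g e) = 2"
    and rest: "\<And>e x y. e \<in> H - B \<Longrightarrow> x \<in> e \<Longrightarrow> y \<in> e \<Longrightarrow> x \<noteq> y \<Longrightarrow> {x, y} \<in> g ` B"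
    by (rule obtain_maximal_pair_system) blast
  have "g ` B \<subseteq> cliques 2 V (g ` B)"
  proof
    fix p assume "p \<in> g ` B"
    then obtain e where e: "e \<in> B" "p = g e"
      by blast
    then obtain x y where xy: "p = {x, y}" "x \<noteq> y"
      using B(3) card_2_iff by metis
    have "p \<subseteq> V"
      using e B HV by blast
    with xy \<open>p \<in> g ` B\<close> show "p \<in> cliques 2 V (g ` B)"
      by (auto simp: cliques_def insert_commute)
  qed
  then have "card (g ` B) \<le> card (cliques 2 V (g ` B))"
    by (intro card_mono finite_cliques) (simp add: V_def)
  then have edges: "card B \<le> card (cliques 2 V (g ` B))"
    by (simp add: card_image[OF B(2)])
  have "H - B \<subseteq> cliques r V (g ` B)"
  proof
    fix e assume "e \<in> H - B"
    then show "e \<in> cliques r V (g ` B)"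
      using rest[of e] HV[of e] by (simp add: cliques_def)
  qed
  then have others: "card (H - B) \<le> card (cliques r V (g ` B))"
    by (intro card_mono finite_cliques) (simp add: V_def)
  have "card H \<le> card B + card (H - B)"
    using card_Un_le[of B "H - B"] B(1) by (simp add: Un_absorb1)
  moreover have "Kst_free s t V (g ` B)"
    using B by (intro Kst_free_of_not_contains_berge[OF free]) (auto simp: V_def)
  ultimately show thesis
    using that[of "g ` B"] edges others unfolding V_def by linarith
qed

lemma not_contains_berge_Kst_empty:
  assumes "1 \<le> s" "1 \<le> t"
  shows "\<not> contains_berge_Kst s t {}"
proof
  assume "contains_berge_Kst s t {}"
  then obtain F where "is_Kst s t F" "berge_copy F {}"
    unfolding contains_berge_Kst_def by blast
  from \<open>is_Kst s t F\<close> obtain X Y where "card X = s" "card Y = t"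
    "F = {{x, y} | x y. x \<in> X \<and> y \<in> Y}"
    unfolding is_Kst_def by blast
  moreover have "F = {}"
    using \<open>berge_copy F {}\<close> by (auto simp: berge_copy_def)
  moreover obtain x y where "x \<in> X" "y \<in> Y"
    using assms \<open>card X = s\<close> \<open>card Y = t\<close> by (metis card.empty ex_in_conv not_one_le_zero)
  ultimately show False
    by blast
qed

lemma ex_berge_Kst_attained:
  assumes "1 \<le> s" "1 \<le> t"
  obtains H where "uniform_hypergraph r n H" "\<not> contains_berge_Kst s t H"
    "card H = ex_berge_Kst r n s t"
proof -
  define S where "S = {card H | H. uniform_hypergraph r n H \<and> \<not> contains_berge_Kst s t H}"
  have "S \<subseteq> card ` Pow (Pow {0..<n})"
    by (auto simp: S_def uniform_hypergraph_def)
  then have "finite S"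
    by (rule finite_subset) simp
  moreover have "uniform_hypergraph r n {}"
    by (simp add: uniform_hypergraph_def)
  then have "card ({} :: nat set set) \<in> S"
    unfolding S_def using not_contains_berge_Kst_empty[OF assms] by blast
  ultimately have "Max S \<in> S"
    by (intro Max_in) auto
  then show thesis
    using that unfolding S_def ex_berge_Kst_def by auto
qed

theorem theorem1p6:
  fixes r s t :: nat
  assumes "3 \<le> r" "r \<le> s" "s \<le> t"
  shows "\<exists>C::real. C > 0 \<and> (\<exists>N. \<forall>n\<ge>N.
           real (ex_berge_Kst r n s t) \<le> C * real n powr (real r - real r * (real r - 1) / (2 * real s)))"
proof -
  obtain c2 where "0 < c2" and edges: "\<And>V E. finite V \<Longrightarrow> Kst_free s t V E \<Longrightarrow>
      real (card (cliques 2 V E)) \<le> c2 * real (card V) powr clique_exponent 2 s"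
    using Kst_free_card_cliques_le[of 2 s t] assms by auto
  obtain cr where "0 < cr" and r_cliques: "\<And>V E. finite V \<Longrightarrow> Kst_free s t V E \<Longrightarrow>
      real (card (cliques r V E)) \<le> cr * real (card V) powr clique_exponent r s"
    using Kst_free_card_cliques_le[of r s t] assms by auto
  have "real (ex_berge_Kst r n s t) \<le> (c2 + cr) * real n powr clique_exponent r s" if "1 \<le> n" for n
  proof -
    obtain H where H: "uniform_hypergraph r n H" "\<not> contains_berge_Kst s t H"
      and ex: "card H = ex_berge_Kst r n s t"
      using ex_berge_Kst_attained[of s t r n] assms by auto
    obtain E where free: "Kst_free s t {0..<n} E"
      and split: "card H \<le> card (cliques 2 {0..<n} E) + card (cliques r {0..<n} E)"
      using card_le_card_cliques_of_not_contains_berge[OF H] by blast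
    have "real (card H) \<le> c2 * real n powr clique_exponent 2 s + cr * real n powr clique_exponent r s"
      using split edges[OF _ free] r_cliques[OF _ free] by (simp flip: of_nat_add)
    also have "\<dots> \<le> c2 * real n powr clique_exponent r s + cr * real n powr clique_exponent r s"
      using clique_exponent_two_le[of r s] assms \<open>1 \<le> n\<close> \<open>0 < c2\<close> by (simp add: powr_mono)
    finally show ?thesis
      by (simp add: ex algebra_simps)
  qed
  with \<open>0 < c2\<close> \<open>0 < cr\<close> show ?thesis
    unfolding clique_exponent_def by (intro exI[of _ "c2 + cr"] exI[of _ 1]) auto
qed

end
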